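(* For all matches $(p,\sigma)$ and $(q,\rho)$: if $p,\sigma\sqsubseteq q,\rho$ then ${\sf fn}(p)={\sf fn}(q)$, ${\sf vn}(p)\subseteq{\sf vn}(q)$ and ${\sf pn}(q)\subseteq{\sf pn}(p)$.
   Context: CPC patterns over a countable set of names: $p ::= \lambda x \mid x \mid \ulcorner x\urcorner \mid p\bullet p$ (binding name, variable name, protected name, compound). ${\sf bn}(p)$, ${\sf vn}(p)$, ${\sf pn}(p)$ are the sets of binding, variable and protected names of $p$; ${\sf fn}(p)={\sf vn}(p)\cup{\sf pn}(p)$. Patterns are well formed (binding names pairwise distinct and distinct from free names). Communicable patterns contain no protected or binding names. A substitution is a finite partial function from names to communicable patterns; $\hat\sigma$ acts on patterns by $\hat\sigma x=x$, $\hat\sigma\ulcorner x\urcorner=\ulcorner x\urcorner$, $\hat\sigma(\lambda x)=\sigma(x)$ if $x\in{\sf dom}(\sigma)$ else $\lambda x$, $\hat\sigma(p\bullet q)=\hat\sigma p\bullet\hat\sigma q$. A match $(p,\sigma)$ is a pattern $p$ and substitution $\sigma$ with ${\sf dom}(\sigma)={\sf bn}(p)$. Compatibility $p,\sigma\sqsubseteq q,\rho$ is the least relation between matches with: $p,\sigma\sqsubseteq\lambda y,\{\hat\sigma p/y\}$ if ${\sf fn}(p)=\emptyset$; $n,\{\}\sqsubseteq n,\{\}$; $\ulcorner n\urcorner,\{\}\sqsubseteq\ulcorner n\urcorner,\{\}$; $\ulcorner n\urcorner,\{\}\sqsubseteq n,\{\}$; $p_1\bullet p_2,\sigma_1\cup\sigma_2\sqsubseteq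 q_1\bullet q_2,\rho_1\cup\rho_2$ if $p_i,\sigma_i\sqsubseteq q_i,\rho_i$ for $i=1,2$. *)

theory Defs
  imports Main
begin

datatype 'n pat = Bind 'n | Var 'n | Prot 'n | Cmp "'n pat" "'n pat"

fun bn :: "'n pat \<Rightarrow> 'n set" where
  "bn (Bind x) = {x}" | "bn (Var x) = {}" | "bn (Prot x) = {}"
| "bn (Cmp p q) = bn p \<union> bn q"

fun vn :: "'n pat \<Rightarrow> 'n set" where
  "vn (Bind x) = {}" | "vn (Var x) = {x}" | "vn (Prot x) = {}"
| "vn (Cmp p q) = vn p \<union> vn q"

fun pn :: "'n pat \<Rightarrow> 'n set" where
  "pn (Bind x) = {}" | "pn (Var x) = {}" | "pn (Prot x) = {x}"
| "pn (Cmp p q) = pn p \<union> pn q"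

definition fn :: "'n pat \<Rightarrow> 'n set" where
  "fn p = vn p \<union> pn p"

fun wf_pat :: "'n pat \<Rightarrow> bool" where
  "wf_pat (Bind x) = True" | "wf_pat (Var x) = True" | "wf_pat (Prot x) = True"
| "wf_pat (Cmp p q) = (wf_pat p \<and> wf_pat q \<and> bn p \<inter> bn q = {}
     \<and> bn (Cmp p q) \<inter> fn (Cmp p q) = {})"

definition communicable :: "'n pat \<Rightarrow> bool" where
  "communicable p \<longleftrightarrow> pn p = {} \<and> bn p = {}"

type_synonym 'n subst = "'n \<rightharpoonup> 'n pat"

definition is_subst :: "'n subst \<Rightarrow> bool" where
  "is_subst \<sigma> \<longleftrightarrow> finite (dom \<sigma>) \<and> (\<forall>p\<in>ran \<sigma>. communicable p \<and> wf_pat p)"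

fun app_subst :: "'n subst \<Rightarrow> 'n pat \<Rightarrow> 'n pat" where
  "app_subst \<sigma> (Var x) = Var x"
| "app_subst \<sigma> (Prot x) = Prot x"
| "app_subst \<sigma> (Bind x) = (case \<sigma> x of Some p \<Rightarrow> p | None \<Rightarrow> Bind x)"
| "app_subst \<sigma> (Cmp p q) = Cmp (app_subst \<sigma> p) (app_subst \<sigma> q)"

definition is_match :: "'n pat \<Rightarrow> 'n subst \<Rightarrow> bool" where
  "is_match p \<sigma> \<longleftrightarrow> wf_pat p \<and> is_subst \<sigma> \<and> dom \<sigma> = bn p"

text \<open>Union of substitutions seen as graphs: defined when they agree on common domain.\<close>
definition compat_maps :: "'n subst \<Rightarrow> 'n subst \<Rightarrow> bool" where
  "compat_maps \<sigma>1 \<sigma>2 \<longleftrightarrow> (\<forall>x\<in>dom \<sigma>1 \<inter> dom \<sigma>2. \<sigma>1 x = \<sigma>2 x)"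

inductive compat :: "'n pat \<Rightarrow> 'n subst \<Rightarrow> 'n pat \<Rightarrow> 'n subst \<Rightarrow> bool" where
  c_bind: "fn p = {} \<Longrightarrow> compat p \<sigma> (Bind y) [y \<mapsto> app_subst \<sigma> p]"
| c_var: "compat (Var n) Map.empty (Var n) Map.empty"
| c_prot: "compat (Prot n) Map.empty (Prot n) Map.empty"
| c_protvar: "compat (Prot n) Map.empty (Var n) Map.empty"
| c_cmp: "\<lbrakk> compat p1 \<sigma>1 q1 \<rho>1; compat p2 \<sigma>2 q2 \<rho>2;
            compat_maps \<sigma>1 \<sigma>2; compat_maps \<rho>1 \<rho>2 \<rbrakk>
          \<Longrightarrow> compat (Cmp p1 p2) (\<sigma>1 ++ \<sigma>2) (Cmp q1 q2) (\<rho>1 ++ \<rho>2)"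

end

theory Submission
  imports Defs
begin

lemma compat_free_names:
  assumes "compat p \<sigma> q \<rho>"
  shows "fn p = fn q \<and> vn p \<subseteq> vn q \<and> pn q \<subseteq> pn p"
  using assms by (induction rule: compat.induct) (auto simp: fn_def)

theorem lemma3p15:
  fixes p q :: "'n pat" and \<sigma> \<rho> :: "'n subst"
  assumes "is_match p \<sigma>" and "is_match q \<rho>"
    and "compat p \<sigma> q \<rho>"
  shows "fn p = fn q \<and> vn p \<subseteq> vn q \<and> pn q \<subseteq> pn p"
  using compat_free_names[OF assms(3)] .

end
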